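(* In the model described in the context, let $(q^*_{BHM},G^*_{BHM})$ be the optimal outcome of the relaxed problem described there, consisting of an $N$-item menu $\{(0,0),(q_1^*,t_1^* ),\dots,(q_N^*,t_N^* )\}$ and the distribution $G^*_{BHM}$ that pools types in the intervals $[0,v_1^*],[v_1^*,v_2^*],\dots,[v_N^*,1]$ at their conditional means, with $w_i^*=\mathbb{E}(\theta\mid v_i^*\le\theta\le v_{i+1}^* )$ for $i=1,\dots,N$ (where $v_{N+1}^*:=1$). Define $\hat b:=\max\{w_1^*-v_1^*,\dots,w_N^*-v_N^*\}$. If $b<\hat b$, then $(q^*_{BHM},G^*_{BHM})$ does not satisfy the (I-OB) constraint and therefore is not a solution to the monopolist's problem.
   Context: A monopolist sells goods of quality $q\in[0,\bar q]$ (fixed $\bar q>0$) to a buyer. The buyer's value $\theta\in[0,1]$ is drawn from a CDF $F_0$ with density $f_0>0$ on $[0,1]$; $F_0$ has increasing hazard rate. Neither the monopolist nor the buyer knows $\theta$. Cost $c:\mathbb{R}_+\to\mathbb{R}_+$ is strictly increasing, continuously differentiable and strictly convex. A menu is a set of items $(q,t)\in[0,\bar q]\times\mathbb{R}_+$ containing $(0,0)$. Buyer utility from $(q,t)$ is $\theta q-t$; an intermediary with commonly known bias $b\ge0$ has utility $(\theta+b)q-t$. Timing: monopolist posts a menu; intermediary commits to a signal about $\theta$; buyer observes realization and picks an item. Payoffs depend only on the posterior mean $w=\mathbb{E}[\theta\mid s]$; a signal is identified with the CDF $G$ of $w$, and feasible $G$ form $MPC(F_0)=\{G \text{ CDF on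 }[0,1]: \int_0^x(F_0-G)\ge0\ \forall x,\ \text{equality at }x=1\}$. Buyer indifferences are broken toward higher quality and toward participation. A mechanism is $q:[0,1]\to[0,\bar q]$, $t:[0,1]\to\mathbb{R}_+$. The monopolist's problem: maximize $\int_0^1[t(w)-c(q(w))]\,dG(w)$ over $(q,t)$ and $G\in MPC(F_0)$ subject to (B-IC) $wq(w)-t(w)\ge wq(w')-t(w')$ for all $w,w'$; (B-IR) $wq(w)-t(w)\ge0$; (I-OB) $G\in\arg\max_{H\in MPC(F_0)}\int[(w+b)q(w)-t(w)]\,dH(w)$. The relaxed problem is the same problem without (I-OB) (the monopolist chooses the information directly). Its optimal $N$-item outcome is obtained by choosing cutoffs $v_1\le\dots\le v_N$ and qualities $q_1,\dots,q_N$ to maximize $\sum_{i=1}^{N-1}(F_0(v_{i+1})-F_0(v_i))(t_i-c(q_i))+(1-F_0(v_N))(t_N-c(q_N))$, where $w_i=\mathbb{E}(\theta\mid v_i\le\theta\le v_{i+1})$ ($v_{N+1}=1$), $t_1=w_1q_1$, and $t_i=t_{i-1}+w_i(q_i-q_{i-1})$ for $i=2,\dots,N$; the optimal values are $v_i^*,q_i^*,t_i^*,w_i^*$. *)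

theory Defs
  imports "HOL-Analysis.Analysis"
begin

definition prior :: "(real \<Rightarrow> real) \<Rightarrow> (real \<Rightarrow> real) \<Rightarrow> bool" where
  "prior F0 f0 \<longleftrightarrow>
     f0 integrable_on {0..1} \<and>
     (\<forall>x\<in>{0..1}. f0 x > 0) \<and>
     (\<forall>x\<in>{0..1}. F0 x = integral {0..x} f0) \<and>
     (\<forall>x<0. F0 x = 0) \<and> (\<forall>x\<ge>1. F0 x = 1) \<and>
     mono_on {0..<1} (\<lambda>x. f0 x / (1 - F0 x))"

definition cost_fun :: "(real \<Rightarrow> real) \<Rightarrow> bool" where
  "cost_fun c \<longleftrightarrow>
     (\<forall>x\<ge>0. c x \<ge> 0) \<and>
     strict_mono_on {0..} c \<and>
     (\<exists>c'. (\<forall>x\<ge>0. (c has_real_derivative c' x) (at x within {0..})) \<and> continuous_on {0..} c') \<and>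
     (\<forall>x\<ge>0. \<forall>y\<ge>0. \<forall>u. x \<noteq> y \<and> 0 < u \<and> u < 1 \<longrightarrow>
        c (u * x + (1 - u) * y) < u * c x + (1 - u) * c y)"

definition cdf01 :: "(real \<Rightarrow> real) \<Rightarrow> bool" where
  "cdf01 G \<longleftrightarrow> mono G \<and> (\<forall>x. continuous (at_right x) G) \<and>
     (\<forall>x<0. G x = 0) \<and> (\<forall>x\<ge>1. G x = 1)"

definition MPC :: "(real \<Rightarrow> real) \<Rightarrow> (real \<Rightarrow> real) set" where
  "MPC F0 = {G. cdf01 G \<and>
     (\<forall>x. integral {0..x} (\<lambda>s. F0 s - G s) \<ge> 0) \<and>
     integral {0..1} (\<lambda>s. F0 s - G s) = 0}"

definition integral_cdf :: "(real \<Rightarrow> real) \<Rightarrow> (real \<Rightarrow> real) \<Rightarrow> real" where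
  "integral_cdf G \<phi> = integral\<^sup>L (interval_measure G) \<phi>"

definition I_OB :: "(real \<Rightarrow> real) \<Rightarrow> real \<Rightarrow> (real \<Rightarrow> real) \<Rightarrow> (real \<Rightarrow> real)
    \<Rightarrow> (real \<Rightarrow> real) \<Rightarrow> bool" where
  "I_OB F0 b q t G \<longleftrightarrow> G \<in> MPC F0 \<and>
     (\<forall>H\<in>MPC F0. integral_cdf H (\<lambda>w. (w + b) * q w - t w)
                  \<le> integral_cdf G (\<lambda>w. (w + b) * q w - t w))"

definition B_IC :: "(real \<Rightarrow> real) \<Rightarrow> (real \<Rightarrow> real) \<Rightarrow> bool" where
  "B_IC q t \<longleftrightarrow> (\<forall>w\<in>{0..1}. \<forall>w'\<in>{0..1}. w * q w - t w \<ge> w * q w' - t w')"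

definition B_IR :: "(real \<Rightarrow> real) \<Rightarrow> (real \<Rightarrow> real) \<Rightarrow> bool" where
  "B_IR q t \<longleftrightarrow> (\<forall>w\<in>{0..1}. w * q w - t w \<ge> 0)"

definition feasible :: "(real \<Rightarrow> real) \<Rightarrow> real \<Rightarrow> real \<Rightarrow> (real \<Rightarrow> real) \<Rightarrow> (real \<Rightarrow> real)
    \<Rightarrow> (real \<Rightarrow> real) \<Rightarrow> bool" where
  "feasible F0 qbar b q t G \<longleftrightarrow>
     (\<forall>w\<in>{0..1}. 0 \<le> q w \<and> q w \<le> qbar \<and> 0 \<le> t w) \<and>
     B_IC q t \<and> B_IR q t \<and> G \<in> MPC F0 \<and> I_OB F0 b q t G"

definition monopolist_solution :: "(real \<Rightarrow> real) \<Rightarrow> (real \<Rightarrow> real) \<Rightarrow> real \<Rightarrow> real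
    \<Rightarrow> (real \<Rightarrow> real) \<Rightarrow> (real \<Rightarrow> real) \<Rightarrow> (real \<Rightarrow> real) \<Rightarrow> bool" where
  "monopolist_solution F0 c qbar b q t G \<longleftrightarrow> feasible F0 qbar b q t G \<and>
     (\<forall>q' t' G'. feasible F0 qbar b q' t' G' \<longrightarrow>
        integral_cdf G' (\<lambda>w. t' w - c (q' w)) \<le> integral_cdf G (\<lambda>w. t w - c (q w)))"

text \<open>E(theta | a <= theta <= b); for a degenerate interval a = b we use the limit value a.\<close>
definition cond_mean :: "(real \<Rightarrow> real) \<Rightarrow> real \<Rightarrow> real \<Rightarrow> real" where
  "cond_mean f0 a b' = (if a < b' then integral {a..b'} (\<lambda>\<theta>. \<theta> * f0 \<theta>) / integral {a..b'} f0 else a)"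

text \<open>Cutoffs v 1, ..., v N (indices 1..N), with v (N+1) := 1.\<close>
definition vext :: "nat \<Rightarrow> (nat \<Rightarrow> real) \<Rightarrow> nat \<Rightarrow> real" where
  "vext N v i = (if i = N + 1 then 1 else v i)"

definition wpool :: "(real \<Rightarrow> real) \<Rightarrow> nat \<Rightarrow> (nat \<Rightarrow> real) \<Rightarrow> nat \<Rightarrow> real" where
  "wpool f0 N v i = cond_mean f0 (v i) (vext N v (i + 1))"

definition qext :: "(nat \<Rightarrow> real) \<Rightarrow> nat \<Rightarrow> real" where
  "qext q i = (if i = 0 then 0 else q i)"

definition price :: "(real \<Rightarrow> real) \<Rightarrow> nat \<Rightarrow> (nat \<Rightarrow> real) \<Rightarrow> (nat \<Rightarrow> real) \<Rightarrow> nat \<Rightarrow> real" where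
  "price f0 N v q i = (\<Sum>j=1..i. wpool f0 N v j * (qext q j - qext q (j - 1)))"

definition nitem_objective :: "(real \<Rightarrow> real) \<Rightarrow> (real \<Rightarrow> real) \<Rightarrow> (real \<Rightarrow> real) \<Rightarrow> nat
    \<Rightarrow> (nat \<Rightarrow> real) \<Rightarrow> (nat \<Rightarrow> real) \<Rightarrow> real" where
  "nitem_objective F0 f0 c N v q =
     (\<Sum>i=1..N-1. (F0 (v (i + 1)) - F0 (v i)) * (price f0 N v q i - c (q i)))
     + (1 - F0 (v N)) * (price f0 N v q N - c (q N))"

definition nitem_feasible :: "real \<Rightarrow> nat \<Rightarrow> (nat \<Rightarrow> real) \<Rightarrow> (nat \<Rightarrow> real) \<Rightarrow> bool" where
  "nitem_feasible qbar N v q \<longleftrightarrow>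
     (\<forall>i\<in>{1..N}. 0 \<le> v i \<and> v i \<le> 1 \<and> 0 \<le> q i \<and> q i \<le> qbar) \<and>
     (\<forall>i\<in>{1..<N}. v i \<le> v (i + 1))"

text \<open>Item chosen by a buyer with posterior mean w from the menu (items 0..N, item 0 = (0,0)):
  a utility maximiser, ties broken toward higher quality (q strictly increasing in the index,
  so highest quality = highest index).\<close>
definition choice :: "(real \<Rightarrow> real) \<Rightarrow> nat \<Rightarrow> (nat \<Rightarrow> real) \<Rightarrow> (nat \<Rightarrow> real) \<Rightarrow> real \<Rightarrow> nat" where
  "choice f0 N v q w = (GREATEST j. j \<le> N \<and>
     (\<forall>k\<le>N. w * qext q k - price f0 N v q k \<le> w * qext q j - price f0 N v q j))"

definition mech_q :: "(real \<Rightarrow> real) \<Rightarrow> nat \<Rightarrow> (nat \<Rightarrow> real) \<Rightarrow> (nat \<Rightarrow> real) \<Rightarrow> real \<Rightarrow> real" where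
  "mech_q f0 N v q w = qext q (choice f0 N v q w)"

definition mech_t :: "(real \<Rightarrow> real) \<Rightarrow> nat \<Rightarrow> (nat \<Rightarrow> real) \<Rightarrow> (nat \<Rightarrow> real) \<Rightarrow> real \<Rightarrow> real" where
  "mech_t f0 N v q w = price f0 N v q (choice f0 N v q w)"

definition G_BHM :: "(real \<Rightarrow> real) \<Rightarrow> (real \<Rightarrow> real) \<Rightarrow> nat \<Rightarrow> (nat \<Rightarrow> real) \<Rightarrow> real \<Rightarrow> real" where
  "G_BHM F0 f0 N v x =
     (if cond_mean f0 0 (v 1) \<le> x then F0 (v 1) else 0) +
     (\<Sum>i=1..N. if wpool f0 N v i \<le> x then F0 (vext N v (i + 1)) - F0 (v i) else 0)"

definition b_hat :: "(real \<Rightarrow> real) \<Rightarrow> nat \<Rightarrow> (nat \<Rightarrow> real) \<Rightarrow> real" where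
  "b_hat f0 N v = Max ((\<lambda>i. wpool f0 N v i - v i) ` {1..N})"

end

theory Submission
  imports Defs "HOL-Probability.Probability"
begin

(*
  If b < w_i - v_i for the pool [v_i, v_(i+1)], split that pool at a point s in (v_i, w_i - b) into two
  pools with conditional means x_L < w_i - b and x_R >= w_i.  Refining a pooling partition keeps the
  majorization inequalities, so the split distribution is again a mean-preserving contraction of F0; it
  differs from G* only by moving the atom at w_i (mass m = m_L + m_R) to x_L and x_R.  The prices make a
  buyer at w_i indifferent between items i-1 and i, item i-1 stays optimal at x_L, and at x_R the buyer
  takes at least the item j chosen at w_i.  As the split preserves the mean, the intermediary's payoff
  rises by at least m_L (w_i - x_L - b) (q_j - q_(i-1)) > 0, so G* is not a best reply.
*)

section \<open>Finite discrete distributions\<close>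

definition step_cdf :: "nat \<Rightarrow> (nat \<Rightarrow> real) \<Rightarrow> (nat \<Rightarrow> real) \<Rightarrow> real \<Rightarrow> real" where
  "step_cdf n x p y = (\<Sum>k<n. if x k \<le> y then p k else 0)"

lemma step_cdf_mono:
  assumes "\<forall>k<n. 0 \<le> p k"
  shows "mono (step_cdf n x p)"
  unfolding mono_def step_cdf_def using assms by (auto intro!: sum_mono)

lemma step_cdf_eq_0: "\<forall>k<n. y < x k \<Longrightarrow> step_cdf n x p y = 0"
  unfolding step_cdf_def by (intro sum.neutral) auto

lemma step_cdf_eq_sum: "\<forall>k<n. x k \<le> y \<Longrightarrow> step_cdf n x p y = (\<Sum>k<n. p k)"
  unfolding step_cdf_def by (intro sum.cong) auto

lemma continuous_at_right_step:
  fixes c w y :: real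
  shows "continuous (at_right y) (\<lambda>z. if c \<le> z then w else 0)"
proof -
  have "eventually (\<lambda>z. (if c \<le> z then w else 0) = (if c \<le> y then w else 0)) (at_right y)"
  proof (cases "c \<le> y")
    case True
    then show ?thesis unfolding eventually_at_right_field by (intro exI[of _ "y + 1"]) auto
  next
    case False
    then show ?thesis unfolding eventually_at_right_field by (intro exI[of _ c]) auto
  qed
  then show ?thesis
    unfolding continuous_within by (auto intro: tendsto_eventually)
qed

lemma continuous_at_right_step_cdf: "continuous (at_right y) (step_cdf n x p)"
  unfolding step_cdf_def[abs_def] by (intro continuous_sum continuous_at_right_step)

lemma cdf01_step_cdf:
  assumes "\<forall>k<n. 0 \<le> p k" "\<forall>k<n. x k \<in> {0..1}" "(\<Sum>k<n. p k) = 1"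
  shows "cdf01 (step_cdf n x p)"
  unfolding cdf01_def
proof (intro conjI allI impI)
  show "mono (step_cdf n x p)"
    using assms(1) by (rule step_cdf_mono)
  show "continuous (at_right y) (step_cdf n x p)" for y
    by (rule continuous_at_right_step_cdf)
  show "step_cdf n x p y = 0" if "y < 0" for y
    using assms(2) that by (intro step_cdf_eq_0) force
  show "step_cdf n x p y = 1" if "1 \<le> y" for y
    using assms(2,3) that by (subst step_cdf_eq_sum) force+
qed

lemma has_integral_step:
  fixes c w lo y :: real
  assumes "lo \<le> y"
  shows "((\<lambda>z. if c \<le> z then w else 0) has_integral w * max 0 (y - max c lo)) {lo..y}"
proof -
  have "((\<lambda>_. w) has_integral w * max 0 (y - max c lo)) {max c lo..y}"
    using has_integral_const_real[of w "max c lo" y]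
    by (cases "max c lo \<le> y") (auto simp: max_def mult.commute)
  then have "((\<lambda>z. if z \<in> {max c lo..y} then w else 0) has_integral w * max 0 (y - max c lo)) {lo..y}"
    by (subst has_integral_restrict) auto
  then show ?thesis
    by (rule has_integral_eq[rotated]) auto
qed

lemma integrable_on_step_cdf: "step_cdf n x p integrable_on {lo..y}"
proof -
  have "(\<lambda>z. if c \<le> z then w else 0) integrable_on {lo..y}" for c w :: real
    using has_integral_step[of lo y c w] by (cases "lo \<le> y") (auto intro: has_integral_integrable)
  then show ?thesis
    unfolding step_cdf_def[abs_def] by (intro integrable_sum) auto
qed

lemma sum_lessThan_Suc_replace:
  fixes h :: "'a \<Rightarrow> 'b \<Rightarrow> 'c::ab_group_add"
  assumes "i < n"
  shows "(\<Sum>k<Suc n. h ((x(i := a, n := c)) k) ((p(i := a', n := c')) k))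
       = (\<Sum>k<n. h (x k) (p k)) - h (x i) (p i) + h a a' + h c c'"
proof -
  have "(\<Sum>k<n. h ((x(i := a, n := c)) k) ((p(i := a', n := c')) k))
      = h a a' + (\<Sum>k\<in>{..<n} - {i}. h ((x(i := a, n := c)) k) ((p(i := a', n := c')) k))"
    using assms by (subst sum.remove[of _ i]) auto
  also have "(\<Sum>k\<in>{..<n} - {i}. h ((x(i := a, n := c)) k) ((p(i := a', n := c')) k))
      = (\<Sum>k\<in>{..<n} - {i}. h (x k) (p k))"
    by (intro sum.cong) auto
  also have "(\<Sum>k\<in>{..<n} - {i}. h (x k) (p k)) = (\<Sum>k<n. h (x k) (p k)) - h (x i) (p i)"
    using assms by (subst sum.remove[of _ i, where g = "\<lambda>k. h (x k) (p k)"]) auto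
  finally show ?thesis
    by (simp add: algebra_simps)
qed

lemma integral_measure_pmf_of_list:
  fixes f :: "real \<Rightarrow> real"
  assumes "pmf_of_list_wf xs"
  shows "(\<integral>y. f y \<partial>measure_pmf (pmf_of_list xs)) = (\<Sum>z\<leftarrow>xs. snd z * f (fst z))"
proof -
  have "(\<integral>y. f y \<partial>measure_pmf (pmf_of_list xs)) = (\<Sum>y\<in>set (map fst xs). f y * pmf (pmf_of_list xs) y)"
    using set_pmf_of_list[OF assms] by (intro integral_measure_pmf_real) auto
  also have "\<dots> = (\<Sum>y\<in>set (map fst xs). \<Sum>z\<leftarrow>xs. if fst z = y then snd z * f y else 0)"
    by (simp add: pmf_pmf_of_list[OF assms] sum_list_map_filter' sum_list_const_mult[symmetric]
        mult.commute if_distrib cong: if_cong)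
  also have "\<dots> = (\<Sum>z\<leftarrow>xs. \<Sum>y\<in>set (map fst xs). if fst z = y then snd z * f y else 0)"
  proof -
    have "(\<Sum>y\<in>S. \<Sum>z\<leftarrow>ys. g y z) = (\<Sum>z\<leftarrow>ys. \<Sum>y\<in>S. g y z)"
      for S ys and g :: "real \<Rightarrow> real \<times> real \<Rightarrow> real"
      by (induction ys) (auto simp: sum.distrib)
    then show ?thesis .
  qed
  also have "\<dots> = (\<Sum>z\<leftarrow>xs. snd z * f (fst z))"
    by (intro arg_cong[where f = sum_list] map_cong refl) (auto simp: sum.delta)
  finally show ?thesis .
qed

lemma step_cdf_limits:
  assumes "(\<Sum>k<n. p k) = 1"
  shows "(step_cdf n x p \<longlongrightarrow> 0) at_bot" "(step_cdf n x p \<longlongrightarrow> 1) at_top"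
proof -
  define B where "B = (\<Sum>k<n. \<bar>x k\<bar>)"
  have B: "\<bar>x k\<bar> \<le> B" if "k < n" for k
    unfolding B_def using that by (intro member_le_sum) auto
  have "step_cdf n x p y = 0" if "y < - B" for y
    using B that by (intro step_cdf_eq_0) (force simp: abs_le_iff)
  then show "(step_cdf n x p \<longlongrightarrow> 0) at_bot"
    by (intro tendsto_eventually, unfold eventually_at_bot_linorder) (intro exI[of _ "- B - 1"], auto)
  have "step_cdf n x p y = 1" if "B \<le> y" for y
    using B that assms by (subst step_cdf_eq_sum) (force simp: abs_le_iff)+
  then show "(step_cdf n x p \<longlongrightarrow> 1) at_top"
    by (intro tendsto_eventually, unfold eventually_at_top_linorder) (intro exI[of _ B], auto)
qed

lemma integral_cdf_step_cdf:
  assumes p: "\<forall>k<n. 0 \<le> p k" "(\<Sum>k<n. p k) = 1" and f: "f \<in> borel_measurable borel"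
  shows "integral_cdf (step_cdf n x p) f = (\<Sum>k<n. p k * f (x k))"
proof -
  define xs where "xs = map (\<lambda>k. (x k, p k)) [0..<n]"
  have sum_xs: "(\<Sum>z\<leftarrow>xs. g z) = (\<Sum>k<n. g (x k, p k))" for g :: "real \<times> real \<Rightarrow> real"
    unfolding xs_def by (simp add: sum_list_distinct_conv_sum_set atLeast0LessThan o_def)
  have wf: "pmf_of_list_wf xs"
    using p unfolding pmf_of_list_wf_def sum_xs[of snd, simplified] by (auto simp: xs_def)
  define M where "M = distr (measure_pmf (pmf_of_list xs)) borel (\<lambda>y. y)"
  define F where "F = step_cdf n x p"
  have F_mono: "F y \<le> F z" if "y \<le> z" for y z
    using step_cdf_mono[OF p(1)] that unfolding F_def mono_def by blast
  have F_right: "continuous (at_right y) F" for y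
    unfolding F_def by (rule continuous_at_right_step_cdf)
  note F_lim = step_cdf_limits[OF p(2), of x, folded F_def]
  have "cdf M y = F y" for y
  proof -
    have "cdf M y = (\<integral>z. indicator {..y} z \<partial>measure_pmf (pmf_of_list xs))"
      unfolding cdf_def M_def by (subst measure_distr) auto
    also have "\<dots> = F y"
      unfolding integral_measure_pmf_of_list[OF wf] sum_xs F_def step_cdf_def
      by (intro sum.cong) (auto simp: indicator_def)
    finally show ?thesis .
  qed
  moreover have "real_distribution M"
    unfolding M_def by (rule prob_space.real_distribution_distr[OF prob_space_measure_pmf]) simp
  ultimately have "interval_measure F = M"
    using real_distribution_interval_measure[OF F_mono F_right F_lim] cdf_interval_measure[OF F_mono F_right F_lim(1)]
    by (intro cdf_unique) auto
  then have "integral_cdf F f = integral\<^sup>L M f"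
    unfolding integral_cdf_def by simp
  also have "\<dots> = (\<integral>y. f y \<partial>measure_pmf (pmf_of_list xs))"
    unfolding M_def by (rule integral_distr) (simp_all add: f)
  also have "\<dots> = (\<Sum>k<n. p k * f (x k))"
    by (simp only: integral_measure_pmf_of_list[OF wf] sum_xs prod.sel)
  finally show ?thesis
    unfolding F_def .
qed

section \<open>The prior\<close>

locale prior_density =
  fixes F0 f0 :: "real \<Rightarrow> real"
  assumes prior: "prior F0 f0"
begin

abbreviation moment :: "real \<Rightarrow> real \<Rightarrow> real" where
  "moment p r \<equiv> integral {p..r} (\<lambda>t. t * f0 t)"

lemma f0_pos: "x \<in> {0..1} \<Longrightarrow> 0 < f0 x"
  and F0_eq_integral: "x \<in> {0..1} \<Longrightarrow> F0 x = integral {0..x} f0"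
  and F0_below: "x < 0 \<Longrightarrow> F0 x = 0"
  and F0_above: "1 \<le> x \<Longrightarrow> F0 x = 1"
  using prior unfolding prior_def by auto

lemma F0_0: "F0 0 = 0"
  using F0_eq_integral[of 0] by simp

lemma integrable_f0: "0 \<le> p \<Longrightarrow> r \<le> 1 \<Longrightarrow> f0 integrable_on {p..r}"
  using prior unfolding prior_def by (auto intro: integrable_on_subinterval)

lemma absolutely_integrable_f0: "0 \<le> p \<Longrightarrow> r \<le> 1 \<Longrightarrow> f0 absolutely_integrable_on {p..r}"
  using f0_pos by (intro nonnegative_absolutely_integrable_1 integrable_f0) (auto simp: less_imp_le)

lemma F0_diff: "0 \<le> p \<Longrightarrow> p \<le> r \<Longrightarrow> r \<le> 1 \<Longrightarrow> F0 r - F0 p = integral {p..r} f0"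
  using Henstock_Kurzweil_Integration.integral_combine[OF _ _ integrable_f0[of 0 r], of p]
    F0_eq_integral[of p] F0_eq_integral[of r]
  by auto

lemma integral_f0_nonneg: "0 \<le> p \<Longrightarrow> r \<le> 1 \<Longrightarrow> 0 \<le> integral {p..r} f0"
  using f0_pos by (intro integral_nonneg integrable_f0) (auto simp: less_imp_le)

lemma integral_f0_pos:
  assumes "0 \<le> p" "p < r" "r \<le> 1"
  shows "0 < integral {p..r} f0"
proof (rule ccontr)
  let ?M = "lebesgue_on {p..r}"
  have space: "space ?M = {p..r}"
    by (simp add: space_restrict_space)
  have int: "integrable ?M f0"
    using absolutely_integrable_f0[of p r] assms by (simp add: integrable_restrict_space set_integrable_def)
  assume "\<not> 0 < integral {p..r} f0"
  then have "integral\<^sup>L ?M f0 = 0"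
    using integral_f0_nonneg[of p r] assms by (simp add: lebesgue_integral_eq_integral[OF int])
  then have "AE x in ?M. f0 x = 0"
    using f0_pos assms space by (subst integral_nonneg_eq_0_iff_AE[OF int, symmetric]) (auto intro!: less_imp_le)
  moreover have "AE x in ?M. 0 < f0 x"
    using AE_space[of ?M] space f0_pos assms by (auto elim!: AE_mp)
  ultimately have "AE x in ?M. False"
    by eventually_elim simp
  then obtain Z where "space ?M \<subseteq> Z" "Z \<in> sets ?M" "emeasure ?M Z = 0"
    by (rule AE_E) (auto simp: subset_iff)
  then have "emeasure ?M (space ?M) = 0"
    using emeasure_mono[of "space ?M" Z ?M] by simp
  then show False
    using assms by (simp add: space emeasure_restrict_space)
qed

lemma F0_clamp: "F0 x = F0 (max 0 (min 1 x))"
  using F0_below[of x] F0_above[of x] F0_0 F0_above[of 1] by (cases "x < 0"; cases "1 \<le> x") auto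

lemma mono_F0: "mono F0"
proof
  fix x y :: real
  assume "x \<le> y"
  then have "F0 (max 0 (min 1 y)) - F0 (max 0 (min 1 x)) = integral {max 0 (min 1 x)..max 0 (min 1 y)} f0"
    by (intro F0_diff) auto
  also have "\<dots> \<ge> 0"
    by (intro integral_f0_nonneg) auto
  finally show "F0 x \<le> F0 y"
    using F0_clamp[of x] F0_clamp[of y] by simp
qed

lemma F0_less: "0 \<le> p \<Longrightarrow> p < r \<Longrightarrow> r \<le> 1 \<Longrightarrow> F0 p < F0 r"
  using F0_diff[of p r] integral_f0_pos[of p r] by simp

lemma continuous_F0: "continuous_on UNIV F0"
proof -
  have "continuous_on {0..1} F0"
    by (rule continuous_on_eq[OF indefinite_integral_continuous_1[OF integrable_f0[of 0 1]]])
      (simp_all add: F0_eq_integral)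
  then have "continuous_on UNIV (F0 \<circ> (\<lambda>x. max 0 (min 1 x)))"
    by (intro continuous_on_compose continuous_intros) (auto elim: continuous_on_subset)
  then show ?thesis
    using F0_clamp by (simp add: o_def)
qed

lemma integrable_F0: "F0 integrable_on {p..r}"
  using continuous_F0 by (intro integrable_continuous_real) (auto intro: continuous_on_subset)

lemma integrable_moment:
  assumes "0 \<le> p" "r \<le> 1"
  shows "(\<lambda>t. t * f0 t) integrable_on {p..r}"
proof -
  have "(\<lambda>t. t * f0 t) absolutely_integrable_on {p..r}"
    by (intro absolutely_integrable_bounded_measurable_product_real absolutely_integrable_f0 assms
        continuous_imp_measurable_on_sets_lebesgue continuous_intros) auto
  then show ?thesis
    using set_lebesgue_integral_eq_integral(1) by blast
qed

lemma moment_combine: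
  "0 \<le> p \<Longrightarrow> p \<le> s \<Longrightarrow> s \<le> r \<Longrightarrow> r \<le> 1 \<Longrightarrow> moment p s + moment s r = moment p r"
  using integrable_moment by (intro Henstock_Kurzweil_Integration.integral_combine) auto

lemma moment_bounds:
  assumes "0 \<le> p" "p \<le> r" "r \<le> 1"
  shows "p * (F0 r - F0 p) \<le> moment p r" "moment p r \<le> r * (F0 r - F0 p)"
proof -
  have f0: "f0 integrable_on {p..r}" "\<And>t. t \<in> {p..r} \<Longrightarrow> 0 \<le> f0 t"
    using integrable_f0 f0_pos assms by (auto intro: less_imp_le)
  have "integral {p..r} (\<lambda>t. p * f0 t) \<le> moment p r"
    using f0 integrable_moment assms by (intro integral_le integrable_on_mult_right) (auto intro!: mult_right_mono)
  moreover have "moment p r \<le> integral {p..r} (\<lambda>t. r * f0 t)"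
    using f0 integrable_moment assms by (intro integral_le integrable_on_mult_right) (auto intro!: mult_right_mono)
  ultimately show "p * (F0 r - F0 p) \<le> moment p r" "moment p r \<le> r * (F0 r - F0 p)"
    using F0_diff assms by auto
qed

lemma moment_diff_le:
  assumes "0 \<le> p" "p \<le> s" "p \<le> x" "s \<le> 1" "x \<le> 1"
  shows "moment p x - moment p s \<le> x * (F0 x - F0 s)"
proof (cases "x \<le> s")
  case True
  then show ?thesis
    using moment_combine[of p x s] moment_bounds(1)[of x s] assms by (simp add: algebra_simps)
next
  case False
  then show ?thesis
    using moment_combine[of p s x] moment_bounds(2)[of s x] assms by (simp add: algebra_simps)
qed

(* f0 need not be continuous, so instead of integrating by parts we differentiate this
   antiderivative of F0 by hand. *)
lemma antiderivative_F0_increment: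
  assumes "x \<in> {0..1}" "y \<in> {0..1}"
  shows "\<bar>(y * F0 y - moment 0 y) - (x * F0 x - moment 0 x) - (y - x) * F0 x\<bar> \<le> \<bar>y - x\<bar> * \<bar>F0 y - F0 x\<bar>"
proof (cases "x \<le> y")
  case True
  then have "(y * F0 y - moment 0 y) - (x * F0 x - moment 0 x) - (y - x) * F0 x = y * (F0 y - F0 x) - moment x y"
    using moment_combine[of 0 x y] assms by (simp add: algebra_simps)
  then show ?thesis
    using moment_bounds[of x y] monoD[OF mono_F0 True] True assms by (simp add: abs_mult algebra_simps)
next
  case False
  then have "(y * F0 y - moment 0 y) - (x * F0 x - moment 0 x) - (y - x) * F0 x = moment y x - y * (F0 x - F0 y)"
    using moment_combine[of 0 y x] assms by (simp add: algebra_simps)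
  then show ?thesis
    using moment_bounds[of y x] monoD[OF mono_F0, of y x] False assms by (simp add: abs_mult algebra_simps)
qed

lemma has_real_derivative_antiderivative_F0:
  assumes "x \<in> {0..1}"
  shows "((\<lambda>y. y * F0 y - moment 0 y) has_real_derivative F0 x) (at x within {0..1})"
proof -
  let ?C = "\<lambda>y. y * F0 y - moment 0 y" and ?F = "at x within {0..1}"
  have "(F0 \<longlongrightarrow> F0 x) ?F"
    using continuous_F0 by (meson UNIV_I continuous_on_def tendsto_within_subset subset_UNIV)
  then have "((\<lambda>y. \<bar>F0 y - F0 x\<bar>) \<longlongrightarrow> 0) ?F"
    by (intro tendsto_rabs_zero LIM_zero)
  moreover have "eventually (\<lambda>y. norm ((?C y - ?C x) / (y - x) - F0 x) \<le> \<bar>F0 y - F0 x\<bar>) ?F"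
    unfolding eventually_at_filter
  proof (intro always_eventually allI impI)
    fix y
    assume y: "y \<noteq> x" "y \<in> {0..1}"
    have "norm ((?C y - ?C x) / (y - x) - F0 x) = \<bar>?C y - ?C x - (y - x) * F0 x\<bar> / \<bar>y - x\<bar>"
      using y by (simp add: field_simps)
    also have "\<dots> \<le> \<bar>F0 y - F0 x\<bar>"
      using antiderivative_F0_increment[OF assms y(2)] y by (simp add: divide_le_eq mult.commute)
    finally show "norm ((?C y - ?C x) / (y - x) - F0 x) \<le> \<bar>F0 y - F0 x\<bar>" .
  qed
  ultimately have "((\<lambda>y. (?C y - ?C x) / (y - x) - F0 x) \<longlongrightarrow> 0) ?F"
    by (rule Lim_null_comparison[rotated])
  then show ?thesis
    unfolding has_field_derivative_iff by (simp add: LIM_zero_iff)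
qed

lemma integral_F0:
  assumes "0 \<le> p" "p \<le> r" "r \<le> 1"
  shows "integral {p..r} F0 = r * F0 r - p * F0 p - moment p r"
proof -
  have "(F0 has_integral (r * F0 r - moment 0 r) - (p * F0 p - moment 0 p)) {p..r}"
  proof (rule fundamental_theorem_of_calculus[OF assms(2)])
    fix x
    assume "x \<in> {p..r}"
    then have "((\<lambda>y. y * F0 y - moment 0 y) has_real_derivative F0 x) (at x within {p..r})"
      using assms by (intro has_field_derivative_subset[OF has_real_derivative_antiderivative_F0]) auto
    then show "((\<lambda>y. y * F0 y - moment 0 y) has_vector_derivative F0 x) (at x within {p..r})"
      by (simp add: has_real_derivative_iff_has_vector_derivative)
  qed
  then show ?thesis
    using moment_combine[of 0 p r] assms by (simp add: integral_unique algebra_simps)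
qed

lemma cond_mean_mass:
  assumes "0 \<le> p" "p < r" "r \<le> 1"
  shows "cond_mean f0 p r * (F0 r - F0 p) = moment p r"
  using F0_diff[of p r] integral_f0_pos[of p r] assms by (simp add: cond_mean_def)

lemma cond_mean_bounds:
  assumes "0 \<le> p" "p \<le> r" "r \<le> 1"
  shows "p \<le> cond_mean f0 p r" "cond_mean f0 p r \<le> r"
proof -
  have "p \<le> cond_mean f0 p r \<and> cond_mean f0 p r \<le> r" if "p < r"
  proof -
    have "0 \<le> (cond_mean f0 p r - p) * (F0 r - F0 p)" "0 \<le> (r - cond_mean f0 p r) * (F0 r - F0 p)"
      using cond_mean_mass[of p r] moment_bounds[of p r] assms that by (simp_all add: algebra_simps)
    then show ?thesis
      using F0_less[of p r] assms that by (simp add: zero_le_mult_iff)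
  qed
  then show "p \<le> cond_mean f0 p r" "cond_mean f0 p r \<le> r"
    using assms by (auto simp: cond_mean_def)
qed

end

section \<open>Menus and the buyer's choice\<close>

abbreviation buyer_utility ::
    "(real \<Rightarrow> real) \<Rightarrow> nat \<Rightarrow> (nat \<Rightarrow> real) \<Rightarrow> (nat \<Rightarrow> real) \<Rightarrow> real \<Rightarrow> nat \<Rightarrow> real" where
  "buyer_utility f0 N v q y k \<equiv> y * qext q k - price f0 N v q k"

definition intermediary_payoff ::
    "(real \<Rightarrow> real) \<Rightarrow> nat \<Rightarrow> (nat \<Rightarrow> real) \<Rightarrow> (nat \<Rightarrow> real) \<Rightarrow> real \<Rightarrow> real \<Rightarrow> real" where
  "intermediary_payoff f0 N v q b w = (w + b) * mech_q f0 N v q w - mech_t f0 N v q w"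

lemma strict_mono_on_qext:
  assumes "0 < q 1" "\<forall>i\<in>{1..<N}. q i < q (i + 1)"
  shows "strict_mono_on {..N} (qext q)"
proof (rule strict_mono_onI)
  have step: "qext q n < qext q (Suc n)" if "n \<in> {..<N}" for n
    using assms that by (cases "n = 0") (auto simp: qext_def)
  show "qext q j < qext q k" if "j \<in> {..N}" "k \<in> {..N}" "j < k" for j k
    by (rule lift_Suc_mono_less_ivl[where f = "qext q" and N = "{..<N}"]) (use step that in auto)
qed

lemma price_Suc: "price f0 N v q (Suc j) = price f0 N v q j + wpool f0 N v (Suc j) * (qext q (Suc j) - qext q j)"
  unfolding price_def by simp

lemma buyer_utility_diff:
  assumes "k \<le> l"
  shows "buyer_utility f0 N v q y l - buyer_utility f0 N v q y k
       = (\<Sum>j\<in>{k<..l}. (y - wpool f0 N v j) * (qext q j - qext q (j - 1)))"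
  using assms
proof (induction l rule: dec_induct)
  case (step l)
  have "buyer_utility f0 N v q y (Suc l) - buyer_utility f0 N v q y k
      = (buyer_utility f0 N v q y l - buyer_utility f0 N v q y k)
        + (y - wpool f0 N v (Suc l)) * (qext q (Suc l) - qext q l)"
    by (simp add: price_Suc algebra_simps)
  also have "\<dots> = (\<Sum>j\<in>insert (Suc l) {k<..l}. (y - wpool f0 N v j) * (qext q j - qext q (j - 1)))"
    by (simp add: step.IH)
  also have "insert (Suc l) {k<..l} = {k<..Suc l}"
    using step.hyps by auto
  finally show ?case .
qed simp

lemma buyer_utility_maximal:
  assumes q: "mono_on {..N} (qext q)" and "j \<le> N" "k \<le> N"
    and below: "\<And>l. 1 \<le> l \<Longrightarrow> l \<le> j \<Longrightarrow> wpool f0 N v l \<le> y"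
    and above: "\<And>l. j < l \<Longrightarrow> l \<le> N \<Longrightarrow> y \<le> wpool f0 N v l"
  shows "buyer_utility f0 N v q y k \<le> buyer_utility f0 N v q y j"
proof -
  have step: "0 \<le> qext q l - qext q (l - 1)" if "l \<le> N" for l
    using mono_onD[OF q, of "l - 1" l] that by simp
  show ?thesis
  proof (cases "k \<le> j")
    case True
    have "buyer_utility f0 N v q y j - buyer_utility f0 N v q y k
        = (\<Sum>l\<in>{k<..j}. (y - wpool f0 N v l) * (qext q l - qext q (l - 1)))"
      using True by (rule buyer_utility_diff)
    also have "\<dots> \<ge> 0"
      using below step \<open>j \<le> N\<close> by (intro sum_nonneg mult_nonneg_nonneg) auto
    finally show ?thesis
      by simp
  next
    case False
    have "buyer_utility f0 N v q y k - buyer_utility f0 N v q y j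
        = (\<Sum>l\<in>{j<..k}. (y - wpool f0 N v l) * (qext q l - qext q (l - 1)))"
      using False by (intro buyer_utility_diff) simp
    also have "\<dots> \<le> 0"
      using above step \<open>k \<le> N\<close> by (intro sum_nonpos mult_nonpos_nonneg) auto
    finally show ?thesis
      by simp
  qed
qed

lemma choice_optimal:
  shows choice_le: "choice f0 N v q y \<le> N"
    and buyer_utility_le_choice:
      "k \<le> N \<Longrightarrow> buyer_utility f0 N v q y k \<le> buyer_utility f0 N v q y (choice f0 N v q y)"
proof -
  let ?u = "buyer_utility f0 N v q y"
  have "Max (?u ` {..N}) \<in> ?u ` {..N}"
    by (rule Max_in) simp_all
  then obtain j where j: "j \<in> {..N}" "Max (?u ` {..N}) = ?u j"
    by (rule imageE)
  have "?u k \<le> Max (?u ` {..N})" if "k \<le> N" for k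
    using that by (intro Max_ge) simp_all
  then have "j \<le> N \<and> (\<forall>k\<le>N. ?u k \<le> ?u j)"
    using j by simp
  then have "choice f0 N v q y \<le> N \<and> (\<forall>k\<le>N. ?u k \<le> ?u (choice f0 N v q y))"
    unfolding choice_def by (rule GreatestI_nat[where P = "\<lambda>j. j \<le> N \<and> (\<forall>k\<le>N. ?u k \<le> ?u j)" and b = N]) auto
  then show "choice f0 N v q y \<le> N" "k \<le> N \<Longrightarrow> ?u k \<le> ?u (choice f0 N v q y)"
    by auto
qed

lemma le_choice:
  "j \<le> N \<Longrightarrow> \<forall>k\<le>N. buyer_utility f0 N v q y k \<le> buyer_utility f0 N v q y j \<Longrightarrow> j \<le> choice f0 N v q y"
  unfolding choice_def by (rule Greatest_le_nat[where b = N]) simp_all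

lemma choice_mono:
  assumes q: "strict_mono_on {..N} (qext q)" and "y \<le> y'"
  shows "choice f0 N v q y \<le> choice f0 N v q y'"
proof (rule ccontr)
  let ?c = "choice f0 N v q y" and ?c' = "choice f0 N v q y'"
  assume "\<not> ?c \<le> ?c'"
  then have "qext q ?c' < qext q ?c"
    using choice_le by (intro strict_mono_onD[OF q]) auto
  moreover have "buyer_utility f0 N v q y' ?c \<le> buyer_utility f0 N v q y' ?c'"
    "buyer_utility f0 N v q y ?c' \<le> buyer_utility f0 N v q y ?c"
    by (intro buyer_utility_le_choice choice_le)+
  then have "(y' - y) * (qext q ?c - qext q ?c') \<le> 0"
    by (simp add: algebra_simps)
  ultimately have "y' \<le> y"
    by (simp add: mult_le_0_iff)
  then have "y' = y"
    using \<open>y \<le> y'\<close> by (rule order.antisym)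
  then show False
    using \<open>\<not> ?c \<le> ?c'\<close> by simp
qed

lemma price_mono:
  assumes "mono_on {..N} (qext q)" "\<And>j. 1 \<le> j \<Longrightarrow> j \<le> N \<Longrightarrow> 0 \<le> wpool f0 N v j"
  shows "mono_on {..N} (price f0 N v q)"
proof (rule mono_onI)
  have "price f0 N v q n \<le> price f0 N v q (Suc n)" if "n \<in> {..<N}" for n
  proof -
    have "0 \<le> wpool f0 N v (Suc n) * (qext q (Suc n) - qext q n)"
      using assms(2)[of "Suc n"] mono_onD[OF assms(1), of n "Suc n"] that by (intro mult_nonneg_nonneg) auto
    then show ?thesis
      by (simp add: price_Suc)
  qed
  then show "price f0 N v q j \<le> price f0 N v q k" if "j \<in> {..N}" "k \<in> {..N}" "j \<le> k" for j k
    by (rule lift_Suc_mono_le_ivl[of "{..<N}"]) (use that in auto)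
qed

lemma intermediary_payoff_choice:
  "intermediary_payoff f0 N v q b y
     = buyer_utility f0 N v q y (choice f0 N v q y) + b * qext q (choice f0 N v q y)"
  unfolding intermediary_payoff_def mech_q_def mech_t_def by (simp add: algebra_simps)

lemma intermediary_payoff_ge:
  assumes "mono_on {..N} (qext q)" "0 \<le> b" "j \<le> choice f0 N v q y"
  shows "buyer_utility f0 N v q y j + b * qext q j \<le> intermediary_payoff f0 N v q b y"
proof -
  have "j \<le> N"
    using assms(3) choice_le order.trans by blast
  then have "buyer_utility f0 N v q y j \<le> buyer_utility f0 N v q y (choice f0 N v q y)"
    by (rule buyer_utility_le_choice)
  moreover have "qext q j \<le> qext q (choice f0 N v q y)"
    using assms(1,3) \<open>j \<le> N\<close> choice_le by (intro mono_onD[OF assms(1)]) auto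
  ultimately show ?thesis
    unfolding intermediary_payoff_choice using assms(2) by (simp add: add_mono mult_left_mono)
qed

lemma borel_measurable_intermediary_payoff:
  assumes "strict_mono_on {..N} (qext q)" "\<And>j. 1 \<le> j \<Longrightarrow> j \<le> N \<Longrightarrow> 0 \<le> wpool f0 N v j"
  shows "intermediary_payoff f0 N v q b \<in> borel_measurable borel"
proof -
  have q: "mono_on {..N} (qext q)"
    using assms(1) by (rule strict_mono_on_imp_mono_on)
  have "choice f0 N v q x \<le> choice f0 N v q y" if "x \<le> y" for x y
    using that by (rule choice_mono[OF assms(1)])
  then have "mono (mech_q f0 N v q)" "mono (mech_t f0 N v q)"
    unfolding mono_def mech_q_def mech_t_def
    by (auto intro!: mono_onD[OF q] mono_onD[OF price_mono[OF q assms(2)]] simp: choice_le)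
  then show ?thesis
    unfolding intermediary_payoff_def[abs_def]
    by (intro borel_measurable_diff borel_measurable_times borel_measurable_add borel_measurable_mono
        measurable_ident_sets measurable_const) auto
qed

section \<open>The pooling distribution of the relaxed optimum\<close>

locale bhm_outcome = prior_density +
  fixes N :: nat and v :: "nat \<Rightarrow> real"
  assumes N_pos: "1 \<le> N"
    and cutoff_range: "\<And>k. 1 \<le> k \<Longrightarrow> k \<le> N \<Longrightarrow> 0 \<le> v k \<and> v k \<le> 1"
    and cutoff_step: "\<And>k. 1 \<le> k \<Longrightarrow> k < N \<Longrightarrow> v k \<le> v (Suc k)"
begin

lemma cutoff_mono: "1 \<le> j \<Longrightarrow> j \<le> k \<Longrightarrow> k \<le> N \<Longrightarrow> v j \<le> v k"
  by (rule lift_Suc_mono_le_ivl[where f = v and N = "{1..<N}"]) (use cutoff_step in auto)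

lemma vext_range: "1 \<le> k \<Longrightarrow> k \<le> N + 1 \<Longrightarrow> 0 \<le> vext N v k \<and> vext N v k \<le> 1"
  using cutoff_range by (auto simp: vext_def)

lemma cutoff_le_vext: "1 \<le> j \<Longrightarrow> j \<le> k \<Longrightarrow> k \<le> N + 1 \<Longrightarrow> j \<le> N \<Longrightarrow> v j \<le> vext N v k"
  using cutoff_mono cutoff_range by (auto simp: vext_def)

lemma wpool_bounds:
  assumes "1 \<le> k" "k \<le> N"
  shows "v k \<le> wpool f0 N v k" "wpool f0 N v k \<le> vext N v (k + 1)"
  using cond_mean_bounds[of "v k" "vext N v (k + 1)"] cutoff_range[OF assms] cutoff_le_vext[of k "k + 1"]
    vext_range[of "k + 1"] assms
  by (auto simp: wpool_def)

lemma wpool_nonneg: "1 \<le> k \<Longrightarrow> k \<le> N \<Longrightarrow> 0 \<le> wpool f0 N v k"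
  using wpool_bounds(1) cutoff_range by (meson order.trans)

lemma wpool_le_cutoff: "1 \<le> k \<Longrightarrow> k < j \<Longrightarrow> j \<le> N \<Longrightarrow> wpool f0 N v k \<le> v j"
  using wpool_bounds(2)[of k] cutoff_mono[of "k + 1" j] by (auto simp: vext_def)

lemma cutoff_le_wpool: "1 \<le> j \<Longrightarrow> j < k \<Longrightarrow> k \<le> N \<Longrightarrow> v (j + 1) \<le> wpool f0 N v k"
  using wpool_bounds(1)[of k] cutoff_mono[of "j + 1" k] by auto

lemma wpool_mono: "1 \<le> k \<Longrightarrow> k \<le> l \<Longrightarrow> l \<le> N \<Longrightarrow> wpool f0 N v k \<le> wpool f0 N v l"
  using wpool_le_cutoff[of k l] wpool_bounds(1)[of l] by (cases "k = l") auto

definition pool_atom :: "nat \<Rightarrow> real" where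
  "pool_atom k = (if k = 0 then cond_mean f0 0 (v 1) else wpool f0 N v k)"

definition pool_mass :: "nat \<Rightarrow> real" where
  "pool_mass k = (if k = 0 then F0 (v 1) else F0 (vext N v (k + 1)) - F0 (v k))"

lemma pool_atom_range: "k \<le> N \<Longrightarrow> 0 \<le> pool_atom k \<and> pool_atom k \<le> 1"
  using cond_mean_bounds[of 0 "v 1"] cutoff_range[of 1] N_pos wpool_nonneg[of k] wpool_bounds(2)[of k]
    vext_range[of "k + 1"]
  by (cases "k = 0") (auto simp: pool_atom_def)

lemma pool_atom_le_cutoff: "k < j \<Longrightarrow> j \<le> N \<Longrightarrow> pool_atom k \<le> v j"
  using cond_mean_bounds[of 0 "v 1"] cutoff_range[of 1] cutoff_mono[of 1 j] wpool_le_cutoff[of k j]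
  by (cases "k = 0") (auto simp: pool_atom_def)

lemma pool_mass_nonneg: "k \<le> N \<Longrightarrow> 0 \<le> pool_mass k"
  using monoD[OF mono_F0, of 0 "v 1"] monoD[OF mono_F0, of "v k" "vext N v (k + 1)"] F0_0
    cutoff_le_vext[of k "k + 1"] cutoff_range[of 1] N_pos
  by (cases "k = 0") (auto simp: pool_mass_def)

lemma sum_pool_mass_lessThan: "1 \<le> j \<Longrightarrow> j \<le> N + 1 \<Longrightarrow> (\<Sum>k<j. pool_mass k) = F0 (vext N v j)"
proof (induction j rule: dec_induct)
  case base
  then show ?case
    using N_pos by (simp add: pool_mass_def vext_def)
next
  case (step j)
  then show ?case
    by (simp add: pool_mass_def vext_def)
qed

lemma sum_pool_mass: "(\<Sum>k<N + 1. pool_mass k) = 1"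
  using sum_pool_mass_lessThan[of "N + 1"] F0_above[of 1] by (simp add: vext_def)

lemma G_BHM_eq_step_cdf: "G_BHM F0 f0 N v = step_cdf (N + 1) pool_atom pool_mass"
proof
  fix y
  have "step_cdf (N + 1) pool_atom pool_mass y
      = (if pool_atom 0 \<le> y then pool_mass 0 else 0) + (\<Sum>k<N. if pool_atom (Suc k) \<le> y then pool_mass (Suc k) else 0)"
    unfolding step_cdf_def Suc_eq_plus1[symmetric] by (rule sum.lessThan_Suc_shift)
  also have "(\<Sum>k<N. if pool_atom (Suc k) \<le> y then pool_mass (Suc k) else 0)
      = (\<Sum>k = 1..N. if wpool f0 N v k \<le> y then F0 (vext N v (k + 1)) - F0 (v k) else 0)"
    unfolding One_nat_def sum.atLeast1_atMost_eq by (intro sum.cong refl) (simp add: pool_atom_def pool_mass_def)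
  moreover have "pool_atom 0 = cond_mean f0 0 (v 1)" "pool_mass 0 = F0 (v 1)"
    by (simp_all add: pool_atom_def pool_mass_def)
  ultimately show "G_BHM F0 f0 N v y = step_cdf (N + 1) pool_atom pool_mass y"
    unfolding G_BHM_def by simp
qed

lemma integral_cdf_G_BHM:
  "f \<in> borel_measurable borel \<Longrightarrow> integral_cdf (G_BHM F0 f0 N v) f = (\<Sum>k<N + 1. pool_mass k * f (pool_atom k))"
  unfolding G_BHM_eq_step_cdf using pool_mass_nonneg sum_pool_mass by (intro integral_cdf_step_cdf) auto

lemma G_BHM_on_pool:
  assumes "1 \<le> i" "i \<le> N" "v i \<le> y" "y < vext N v (i + 1)"
  shows "G_BHM F0 f0 N v y = F0 (v i) + (if pool_atom i \<le> y then pool_mass i else 0)"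
proof -
  let ?f = "\<lambda>k. if pool_atom k \<le> y then pool_mass k else 0"
  have "G_BHM F0 f0 N v y = (\<Sum>k<Suc i. ?f k) + (\<Sum>k = Suc i..<N + 1. ?f k)"
    unfolding G_BHM_eq_step_cdf step_cdf_def lessThan_atLeast0
    using assms by (intro sum.atLeastLessThan_concat[symmetric]) auto
  also have "(\<Sum>k<Suc i. ?f k) = (\<Sum>k<i. pool_mass k) + ?f i"
  proof -
    have "pool_atom k \<le> y" if "k < i" for k
      using pool_atom_le_cutoff[OF that assms(2)] assms(3) by simp
    then show ?thesis
      by simp
  qed
  also have "(\<Sum>k<i. pool_mass k) = F0 (v i)"
    using sum_pool_mass_lessThan[of i] assms by (simp add: vext_def)
  also have "(\<Sum>k = Suc i..<N + 1. ?f k) = 0"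
  proof (intro sum.neutral ballI)
    fix k
    assume "k \<in> {Suc i..<N + 1}"
    then have "y < pool_atom k"
      using cutoff_le_wpool[of i k] assms by (auto simp: pool_atom_def vext_def)
    then show "?f k = 0"
      by simp
  qed
  finally show ?thesis
    by simp
qed

end

section \<open>Splitting a pool\<close>

lemma mean_preserving_split_gain:
  fixes mL mR xL xR w q0 q1 t0 t1 b :: real
  assumes "mL * xL + mR * xR = (mL + mR) * w" and "w * q1 - t1 = w * q0 - t0"
  shows "mL * (xL * q0 - t0 + b * q0) + mR * (xR * q1 - t1 + b * q1) - (mL + mR) * (w * q1 - t1 + b * q1)
       = mL * (w - xL - b) * (q1 - q0)"
  using assms by algebra

locale pool_split = bhm_outcome +
  fixes q :: "nat \<Rightarrow> real" and b :: real and i :: nat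
  assumes qext_strict_mono: "strict_mono_on {..N} (qext q)"
    and bias_nonneg: "0 \<le> b"
    and pool_index: "1 \<le> i" "i \<le> N"
    and bias_below_gap: "b < wpool f0 N v i - v i"
begin

abbreviation "lo \<equiv> v i"
abbreviation "hi \<equiv> vext N v (i + 1)"
abbreviation "w \<equiv> wpool f0 N v i"
abbreviation "m \<equiv> F0 hi - F0 lo"

(* Any split point in (lo, w - b) would do. *)
definition s :: real where
  "s = (lo + (w - b)) / 2"

abbreviation "mL \<equiv> F0 s - F0 lo"
abbreviation "xL \<equiv> cond_mean f0 lo s"
abbreviation "mR \<equiv> F0 hi - F0 s"
abbreviation "xR \<equiv> cond_mean f0 s hi"

lemma pool_range: "0 \<le> lo" "lo \<le> hi" "hi \<le> 1"
  using cutoff_range[OF pool_index] cutoff_le_vext[of i "i + 1"] vext_range[of "i + 1"] pool_index by auto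

lemma w_bounds: "lo \<le> w" "w \<le> hi"
  using wpool_bounds[OF pool_index] by auto

lemma s_bounds: "lo < s" "s < w - b" "s < hi" "0 \<le> s" "s \<le> 1"
  using bias_below_gap bias_nonneg w_bounds pool_range unfolding s_def by auto

lemma left_pool: "0 < mL" "mL * xL = moment lo s" "lo \<le> xL" "xL \<le> s"
  using F0_less[of lo s] cond_mean_mass[of lo s] cond_mean_bounds[of lo s] pool_range s_bounds
  by (auto simp: mult.commute)

lemma right_pool: "0 < mR" "mR * xR = moment s hi" "s \<le> xR" "xR \<le> hi"
  using F0_less[of s hi] cond_mean_mass[of s hi] cond_mean_bounds[of s hi] pool_range s_bounds
  by (auto simp: mult.commute)

lemma split_preserves_mean: "mL * xL + mR * xR = m * w"
  using cond_mean_mass[of lo hi] moment_combine[of lo s hi] left_pool(2) right_pool(2) pool_range s_bounds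
  by (simp add: wpool_def mult.commute)

lemma xL_less: "xL < w - b"
  using left_pool(4) s_bounds(2) by simp

lemma w_le_xR: "w \<le> xR"
proof -
  have "mR * (xR - w) = mL * (w - xL)"
    using split_preserves_mean by (simp add: algebra_simps)
  moreover have "0 \<le> mL * (w - xL)"
    using left_pool(1) xL_less bias_nonneg by simp
  ultimately have "0 \<le> mR * (xR - w)"
    by linarith
  then show ?thesis
    using right_pool(1) by (simp add: zero_le_mult_iff)
qed

lemma pool_atom_i: "pool_atom i = w"
  using pool_index by (simp add: pool_atom_def)

lemma pool_mass_i: "pool_mass i = m"
  using pool_index by (simp add: pool_mass_def)

abbreviation "split_atom \<equiv> pool_atom(i := xL, N + 1 := xR)"
abbreviation "split_mass \<equiv> pool_mass(i := mL, N + 1 := mR)"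

definition G_split :: "real \<Rightarrow> real" where
  "G_split = step_cdf (N + 2) split_atom split_mass"

lemma split_mass_nonneg: "\<forall>k<N + 2. 0 \<le> split_mass k"
  using pool_mass_nonneg left_pool(1) right_pool(1) by (auto simp: less_Suc_eq)

lemma sum_split:
  fixes h :: "real \<Rightarrow> real \<Rightarrow> real"
  shows "(\<Sum>k<N + 2. h (split_atom k) (split_mass k))
       = (\<Sum>k<N + 1. h (pool_atom k) (pool_mass k)) - h w m + h xL mL + h xR mR"
proof -
  have "N + 2 = Suc (N + 1)"
    by simp
  then show ?thesis
    using sum_lessThan_Suc_replace[of i "N + 1" h pool_atom xL xR pool_mass mL mR] pool_index
    by (simp only: pool_atom_i pool_mass_i)
qed

lemma sum_split_mass: "(\<Sum>k<N + 2. split_mass k) = 1"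
  using sum_split[of "\<lambda>a p. p"] sum_pool_mass by simp

lemma G_split_eq:
  "G_split y = G_BHM F0 f0 N v y - (if w \<le> y then m else 0)
     + (if xL \<le> y then mL else 0) + (if xR \<le> y then mR else 0)"
  unfolding G_split_def G_BHM_eq_step_cdf step_cdf_def by (rule sum_split)

lemma cdf01_G_split: "cdf01 G_split"
  unfolding G_split_def
proof (rule cdf01_step_cdf[OF split_mass_nonneg _ sum_split_mass])
  show "\<forall>k<N + 2. split_atom k \<in> {0..1}"
    using pool_atom_range left_pool right_pool pool_range s_bounds by (auto simp: less_Suc_eq)
qed

lemma integral_cdf_G_split:
  assumes "f \<in> borel_measurable borel"
  shows "integral_cdf G_split f = integral_cdf (G_BHM F0 f0 N v) f - m * f w + mL * f xL + mR * f xR"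
  unfolding G_split_def integral_cdf_step_cdf[OF split_mass_nonneg sum_split_mass assms] integral_cdf_G_BHM[OF assms]
  by (rule sum_split)

lemma split_atoms_nonneg: "0 \<le> w" "0 \<le> xL" "0 \<le> xR"
  using pool_range w_bounds left_pool right_pool s_bounds by auto

lemma integrable_F0_minus_G_BHM: "(\<lambda>y. F0 y - G_BHM F0 f0 N v y) integrable_on {p..r}"
  unfolding G_BHM_eq_step_cdf by (intro integrable_diff integrable_F0 integrable_on_step_cdf)

lemma integral_F0_minus_G_split:
  assumes "0 \<le> x"
  shows "integral {0..x} (\<lambda>y. F0 y - G_split y) = integral {0..x} (\<lambda>y. F0 y - G_BHM F0 f0 N v y)
           + m * max 0 (x - w) - mL * max 0 (x - xL) - mR * max 0 (x - xR)"
proof -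
  have step: "((\<lambda>y. if c \<le> y then p else 0) has_integral p * max 0 (x - c)) {0..x}" if "0 \<le> c" for c p
    using has_integral_step[OF assms, of c p] that by (simp add: max_def)
  have "((\<lambda>y. (F0 y - G_BHM F0 f0 N v y) + (if w \<le> y then m else 0) - (if xL \<le> y then mL else 0)
          - (if xR \<le> y then mR else 0))
        has_integral (integral {0..x} (\<lambda>y. F0 y - G_BHM F0 f0 N v y)
          + m * max 0 (x - w) - mL * max 0 (x - xL) - mR * max 0 (x - xR))) {0..x}"
    using split_atoms_nonneg
    by (intro has_integral_diff has_integral_add integrable_integral integrable_F0_minus_G_BHM step)
  moreover have "(\<lambda>y. (F0 y - G_BHM F0 f0 N v y) + (if w \<le> y then m else 0) - (if xL \<le> y then mL else 0)
          - (if xR \<le> y then mR else 0)) = (\<lambda>y. F0 y - G_split y)"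
    by (simp add: G_split_eq fun_eq_iff)
  ultimately show ?thesis
    by (simp add: integral_unique)
qed

lemma integral_F0_minus_G_BHM_on_pool:
  assumes "lo \<le> x" "x < hi"
  shows "integral {lo..x} (\<lambda>y. F0 y - G_BHM F0 f0 N v y)
    = x * F0 x - lo * F0 lo - moment lo x - F0 lo * (x - lo) - m * max 0 (x - w)"
proof -
  have "(F0 has_integral (x * F0 x - lo * F0 lo - moment lo x)) {lo..x}"
    using integral_F0[of lo x] integrable_F0[of lo x] pool_range assms
    by (metis integrable_integral order.trans order_less_imp_le)
  moreover have "((\<lambda>_. F0 lo) has_integral F0 lo * (x - lo)) {lo..x}"
    using has_integral_const_real[of "F0 lo" lo x] assms by (simp add: mult.commute)
  moreover have "((\<lambda>y. if w \<le> y then m else 0) has_integral m * max 0 (x - w)) {lo..x}"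
    using has_integral_step[OF assms(1), of w m] w_bounds by (simp add: max_def)
  ultimately have "((\<lambda>y. F0 y - (F0 lo + (if w \<le> y then m else 0))) has_integral
      x * F0 x - lo * F0 lo - moment lo x - (F0 lo * (x - lo) + m * max 0 (x - w))) {lo..x}"
    by (intro has_integral_diff has_integral_add)
  then have "((\<lambda>y. F0 y - G_BHM F0 f0 N v y) has_integral
      x * F0 x - lo * F0 lo - moment lo x - (F0 lo * (x - lo) + m * max 0 (x - w))) {lo..x}"
    by (rule has_integral_eq[rotated])
      (use G_BHM_on_pool[OF pool_index] assms in \<open>auto simp: pool_atom_i pool_mass_i\<close>)
  then show ?thesis
    by (simp add: integral_unique)
qed

lemma integral_F0_minus_G_split_inside:
  assumes "xL < x" "x < xR"
  shows "integral {0..x} (\<lambda>y. F0 y - G_split y)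
    = integral {0..lo} (\<lambda>y. F0 y - G_BHM F0 f0 N v y) + (x * (F0 x - F0 s) - (moment lo x - moment lo s))"
proof -
  have x: "lo \<le> x" "x < hi" "0 \<le> x"
    using assms left_pool right_pool pool_range by auto
  have "integral {0..x} (\<lambda>y. F0 y - G_BHM F0 f0 N v y)
      = integral {0..lo} (\<lambda>y. F0 y - G_BHM F0 f0 N v y) + integral {lo..x} (\<lambda>y. F0 y - G_BHM F0 f0 N v y)"
    using x pool_range by (intro Henstock_Kurzweil_Integration.integral_combine[symmetric] integrable_F0_minus_G_BHM) auto
  moreover have "max 0 (x - xL) = x - xL" "max 0 (x - xR) = 0"
    using assms by auto
  ultimately show ?thesis
    using integral_F0_minus_G_split[OF x(3)] integral_F0_minus_G_BHM_on_pool[OF x(1,2)] left_pool(2)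
    by (simp add: algebra_simps)
qed

lemma integral_F0_minus_G_split_nonneg:
  assumes G: "G_BHM F0 f0 N v \<in> MPC F0"
  shows "0 \<le> integral {0..x} (\<lambda>y. F0 y - G_split y)"
proof -
  have G_nonneg: "0 \<le> integral {0..z} (\<lambda>y. F0 y - G_BHM F0 f0 N v y)" for z
    using G unfolding MPC_def by auto
  consider "x < 0" | "0 \<le> x" "x \<le> xL" | "xR \<le> x" | "xL < x" "x < xR"
    by linarith
  then show ?thesis
  proof cases
    case 1
    then show ?thesis
      by simp
  next
    case 2
    then show ?thesis
      using integral_F0_minus_G_split G_nonneg[of x] xL_less w_le_xR bias_nonneg by simp
  next
    case 3
    then have "max 0 (x - w) = x - w" "max 0 (x - xL) = x - xL" "max 0 (x - xR) = x - xR"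
      using xL_less w_le_xR bias_nonneg by auto
    moreover have "m * (x - w) - mL * (x - xL) - mR * (x - xR) = 0"
      using split_preserves_mean by (simp add: algebra_simps)
    ultimately show ?thesis
      using integral_F0_minus_G_split[of x] G_nonneg[of x] split_atoms_nonneg 3 by simp
  next
    case 4
    have "moment lo x - moment lo s \<le> x * (F0 x - F0 s)"
      using 4 left_pool right_pool pool_range s_bounds by (intro moment_diff_le) auto
    then show ?thesis
      using integral_F0_minus_G_split_inside[OF 4] G_nonneg[of lo] by simp
  qed
qed

lemma G_split_in_MPC:
  assumes "G_BHM F0 f0 N v \<in> MPC F0"
  shows "G_split \<in> MPC F0"
proof -
  have "integral {0..1} (\<lambda>y. F0 y - G_BHM F0 f0 N v y) = 0"
    using assms unfolding MPC_def by auto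
  moreover have "m * (1 - w) - mL * (1 - xL) - mR * (1 - xR) = 0"
    using split_preserves_mean by (simp add: algebra_simps)
  moreover have "max 0 (1 - w) = 1 - w" "max 0 (1 - xL) = 1 - xL" "max 0 (1 - xR) = 1 - xR"
    using w_bounds xL_less w_le_xR bias_nonneg right_pool pool_range by auto
  ultimately have "integral {0..1} (\<lambda>y. F0 y - G_split y) = 0"
    using integral_F0_minus_G_split[of 1] by simp
  then show ?thesis
    unfolding MPC_def using cdf01_G_split integral_F0_minus_G_split_nonneg[OF assms] by auto
qed

lemma qext_mono: "mono_on {..N} (qext q)"
  using qext_strict_mono by (rule strict_mono_on_imp_mono_on)

lemma item_before_pool_optimal:
  assumes "lo \<le> y" "y \<le> w" "k \<le> N"
  shows "buyer_utility f0 N v q y k \<le> buyer_utility f0 N v q y (i - 1)"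
proof (rule buyer_utility_maximal[OF qext_mono _ assms(3)])
  show "wpool f0 N v l \<le> y" if "1 \<le> l" "l \<le> i - 1" for l
  proof -
    have "l < i"
      using that(2) pool_index(1) by linarith
    then show ?thesis
      using wpool_le_cutoff[OF that(1) _ pool_index(2)] assms(1) by fastforce
  qed
  show "y \<le> wpool f0 N v l" if "i - 1 < l" "l \<le> N" for l
  proof -
    have "i \<le> l"
      using that(1) by linarith
    then show ?thesis
      using wpool_mono[OF pool_index(1) _ that(2)] assms(2) by fastforce
  qed
qed (use pool_index in simp)

lemma pool_item_optimal_at_mean: "k \<le> N \<Longrightarrow> buyer_utility f0 N v q w k \<le> buyer_utility f0 N v q w i"
  using pool_index wpool_mono by (intro buyer_utility_maximal[OF qext_mono]) auto

lemma choice_at_mean: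
  "i \<le> choice f0 N v q w"
  "buyer_utility f0 N v q w (choice f0 N v q w) = buyer_utility f0 N v q w (i - 1)"
proof -
  show "i \<le> choice f0 N v q w"
    using pool_item_optimal_at_mean pool_index by (intro le_choice) auto
  have "buyer_utility f0 N v q w (choice f0 N v q w) \<le> buyer_utility f0 N v q w (i - 1)"
    using w_bounds choice_le by (intro item_before_pool_optimal) auto
  moreover have "buyer_utility f0 N v q w (i - 1) \<le> buyer_utility f0 N v q w (choice f0 N v q w)"
    using pool_index by (intro buyer_utility_le_choice) simp
  ultimately show "buyer_utility f0 N v q w (choice f0 N v q w) = buyer_utility f0 N v q w (i - 1)"
    by (rule order.antisym)
qed

lemma choice_at_xL: "i - 1 \<le> choice f0 N v q xL"
  using item_before_pool_optimal left_pool(3) xL_less bias_nonneg pool_index by (intro le_choice) auto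

lemma intermediary_gain:
  "m * intermediary_payoff f0 N v q b w
     < mL * intermediary_payoff f0 N v q b xL + mR * intermediary_payoff f0 N v q b xR"
proof -
  let ?\<phi> = "intermediary_payoff f0 N v q b"
  define j where "j = choice f0 N v q w"
  define q0 q1 t0 t1 where "q0 = qext q (i - 1)" "q1 = qext q j"
    "t0 = price f0 N v q (i - 1)" "t1 = price f0 N v q j"
  have tie: "w * q1 - t1 = w * q0 - t0"
    using choice_at_mean(2) unfolding j_def q0_q1_t0_t1_def .
  have "q0 < q1"
    unfolding q0_q1_t0_t1_def j_def using choice_at_mean(1) choice_le pool_index
    by (intro strict_mono_onD[OF qext_strict_mono]) auto
  have "m * ?\<phi> w = (mL + mR) * (w * q1 - t1 + b * q1)"
    unfolding intermediary_payoff_choice q0_q1_t0_t1_def j_def by simp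
  moreover have "mL * (xL * q0 - t0 + b * q0) \<le> mL * ?\<phi> xL"
    unfolding q0_q1_t0_t1_def using left_pool(1)
    by (intro mult_left_mono intermediary_payoff_ge[OF qext_mono bias_nonneg choice_at_xL]) simp
  moreover have "mR * (xR * q1 - t1 + b * q1) \<le> mR * ?\<phi> xR"
    unfolding q0_q1_t0_t1_def j_def using right_pool(1)
    by (intro mult_left_mono intermediary_payoff_ge[OF qext_mono bias_nonneg]
        choice_mono[OF qext_strict_mono w_le_xR]) simp
  moreover have "0 < mL * (w - xL - b) * (q1 - q0)"
    using left_pool(1) xL_less \<open>q0 < q1\<close> by simp
  moreover have "mL * xL + mR * xR = (mL + mR) * w"
    using split_preserves_mean by simp
  ultimately show ?thesis
    using mean_preserving_split_gain[OF _ tie, of mL xL mR xR b] by linarith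
qed

lemma not_I_OB: "\<not> I_OB F0 b (mech_q f0 N v q) (mech_t f0 N v q) (G_BHM F0 f0 N v)"
proof
  let ?\<phi> = "intermediary_payoff f0 N v q b"
  assume "I_OB F0 b (mech_q f0 N v q) (mech_t f0 N v q) (G_BHM F0 f0 N v)"
  moreover have "(\<lambda>w. (w + b) * mech_q f0 N v q w - mech_t f0 N v q w) = ?\<phi>"
    by (simp add: intermediary_payoff_def fun_eq_iff)
  ultimately have "G_BHM F0 f0 N v \<in> MPC F0" "integral_cdf G_split ?\<phi> \<le> integral_cdf (G_BHM F0 f0 N v) ?\<phi>"
    unfolding I_OB_def using G_split_in_MPC by auto
  moreover have "?\<phi> \<in> borel_measurable borel"
    using qext_strict_mono wpool_nonneg by (rule borel_measurable_intermediary_payoff)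
  ultimately show False
    using integral_cdf_G_split intermediary_gain by fastforce
qed

end

theorem proposition4:
  fixes F0 f0 c :: "real \<Rightarrow> real" and qbar b :: real and N :: nat
    and v q :: "nat \<Rightarrow> real"
  assumes "prior F0 f0"
    and "cost_fun c"
    and "qbar > 0"
    and "b \<ge> 0"
    and "N \<ge> 1"
    and "nitem_feasible qbar N v q"
    and "\<forall>v' q'. nitem_feasible qbar N v' q' \<longrightarrow>
           nitem_objective F0 f0 c N v' q' \<le> nitem_objective F0 f0 c N v q"
    and "0 < q 1"
    and "\<forall>i\<in>{1..<N}. q i < q (i + 1)"
    and "b < b_hat f0 N v"
  shows "\<not> I_OB F0 b (mech_q f0 N v q) (mech_t f0 N v q) (G_BHM F0 f0 N v)
       \<and> \<not> monopolist_solution F0 c qbar b (mech_q f0 N v q) (mech_t f0 N v q) (G_BHM F0 f0 N v)"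
proof -
  interpret bhm_outcome F0 f0 N v
    using assms(1,5,6) by unfold_locales (auto simp: nitem_feasible_def)
  have "b_hat f0 N v \<in> (\<lambda>i. wpool f0 N v i - v i) ` {1..N}"
    unfolding b_hat_def using assms(5) by (intro Max_in) auto
  then obtain i where "i \<in> {1..N}" "b < wpool f0 N v i - v i"
    using assms(10) by auto
  then interpret pool_split F0 f0 N v q b i
    using assms(4) strict_mono_on_qext[OF assms(8,9)] by unfold_locales auto
  show ?thesis
    using not_I_OB unfolding monopolist_solution_def feasible_def by blast
qed

end
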